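(* Let $U$ be a finite set, $\alpha>1$ and $\delta\in[0,1)$. For probability distributions $P,Q$ on $U$, $e^{(\alpha-1)D^\delta_\alpha(P\|Q)}$ equals the optimal value of the program $$\min_{P',Q'} \sum_x P'(x)^\alpha Q'(x)^{1-\alpha}\quad\text{s.t.}\quad \sum_x P'(x)=\sum_x Q'(x)=1,\ 0\le P'(x)\le \tfrac{P(x)}{1-\delta},\ 0\le Q'(x)\le\tfrac{Q(x)}{1-\delta}\ \ \forall x,$$ the objective is jointly convex in $(P,Q,P',Q')$ over a convex feasible set, and consequently $(P,Q)\mapsto e^{(\alpha-1)D^\delta_\alpha(P\|Q)}$ is jointly convex.
   Context: For $\alpha>1$, $D_\alpha(P\|Q)=\frac{1}{\alpha-1}\log\sum_x P(x)^\alpha Q(x)^{1-\alpha}$ (with $0^\alpha 0^{1-\alpha}=0$ and $u^\alpha 0^{1-\alpha}=\infty$ for $u>0$), and $D^\delta_\alpha(P\|Q)=\inf\{D_\alpha(P'\|Q'): P=(1-\delta)P'+\delta P'',\ Q=(1-\delta)Q'+\delta Q''\}$, the infimum over probability distributions $P',P'',Q',Q''$ on $U$. *)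

theory Defs
  imports "HOL-Analysis.Analysis"
begin

text \<open>Probability distributions on a finite type (the finite set U is the universe of the type).\<close>
definition is_dist :: "('a::finite \<Rightarrow> real) \<Rightarrow> bool" where
  "is_dist P \<longleftrightarrow> (\<forall>x. 0 \<le> P x) \<and> (\<Sum>x\<in>UNIV. P x) = 1"

definition renyi_term :: "real \<Rightarrow> real \<Rightarrow> real \<Rightarrow> ereal" where
  "renyi_term \<alpha> u v =
     (if u = 0 \<and> v = 0 then 0
      else if v = 0 then \<infinity>
      else ereal (u powr \<alpha> * v powr (1 - \<alpha>)))"

definition renyi_sum :: "real \<Rightarrow> ('a::finite \<Rightarrow> real) \<Rightarrow> ('a \<Rightarrow> real) \<Rightarrow> ereal" where
  "renyi_sum \<alpha> P Q = (\<Sum>x\<in>UNIV. renyi_term \<alpha> (P x) (Q x))"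

definition renyi_div :: "real \<Rightarrow> ('a::finite \<Rightarrow> real) \<Rightarrow> ('a \<Rightarrow> real) \<Rightarrow> ereal" where
  "renyi_div \<alpha> P Q =
     (if renyi_sum \<alpha> P Q = \<infinity> then \<infinity>
      else ereal (ln (real_of_ereal (renyi_sum \<alpha> P Q)) / (\<alpha> - 1)))"

definition smooth_renyi :: "real \<Rightarrow> real \<Rightarrow> ('a::finite \<Rightarrow> real) \<Rightarrow> ('a \<Rightarrow> real) \<Rightarrow> ereal" where
  "smooth_renyi \<alpha> \<delta> P Q =
     (INF (P', P'', Q', Q'') \<in> {(P', P'', Q', Q'').
          is_dist P' \<and> is_dist P'' \<and> is_dist Q' \<and> is_dist Q'' \<and>
          P = (\<lambda>x. (1 - \<delta>) * P' x + \<delta> * P'' x) \<and>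
          Q = (\<lambda>x. (1 - \<delta>) * Q' x + \<delta> * Q'' x)}.
        renyi_div \<alpha> P' Q')"

fun exp_ereal :: "ereal \<Rightarrow> ereal" where
  "exp_ereal (ereal r) = ereal (exp r)"
| "exp_ereal PInfty = PInfty"
| "exp_ereal MInfty = 0"

definition smooth_feasible :: "real \<Rightarrow> ('a::finite \<Rightarrow> real) \<Rightarrow> ('a \<Rightarrow> real)
    \<Rightarrow> ('a \<Rightarrow> real) \<Rightarrow> ('a \<Rightarrow> real) \<Rightarrow> bool" where
  "smooth_feasible \<delta> P Q P' Q' \<longleftrightarrow>
     (\<Sum>x\<in>UNIV. P' x) = 1 \<and> (\<Sum>x\<in>UNIV. Q' x) = 1 \<and>
     (\<forall>x. 0 \<le> P' x \<and> P' x \<le> P x / (1 - \<delta>) \<and> 0 \<le> Q' x \<and> Q' x \<le> Q x / (1 - \<delta>))"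

definition joint_feasible :: "real \<Rightarrow> (('a::finite \<Rightarrow> real) \<times> ('a \<Rightarrow> real) \<times> ('a \<Rightarrow> real) \<times> ('a \<Rightarrow> real)) set" where
  "joint_feasible \<delta> = {(P, Q, P', Q'). is_dist P \<and> is_dist Q \<and> smooth_feasible \<delta> P Q P' Q'}"

definition cmix :: "real \<Rightarrow> ('a \<Rightarrow> real) \<Rightarrow> ('a \<Rightarrow> real) \<Rightarrow> ('a \<Rightarrow> real)" where
  "cmix t f g = (\<lambda>x. t * f x + (1 - t) * g x)"

end

theory Submission
  imports Defs
begin

text \<open>Writing P = (1 - \<delta>) P' + \<delta> P'' with a distribution P'' is possible exactly when the
  distribution P' satisfies P' \<le> P / (1 - \<delta>), and x \<mapsto> exp ((\<alpha> - 1) x) maps [-\<infinity>, \<infinity>]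
  order-isomorphically onto [0, \<infinity>], so it commutes with the infimum defining the smoothed
  divergence; this gives the program. Each summand u^\<alpha> v^(1 - \<alpha>) = v (u / v)^\<alpha> is the perspective of
  the convex function u^\<alpha>, hence jointly convex, and the constraints are linear in
  (P, Q, P', Q'). Minimising a jointly convex function over the fibres of a convex set yields
  a convex function of (P, Q).\<close>

lemma convex_on_powr_nonneg:
  fixes p :: real
  assumes "p \<ge> 1"
  shows "convex_on {0..} (\<lambda>x. x powr p)"
proof
  fix t x y :: real
  assume t: "0 < t" "t < 1" and xy: "x \<in> {0..}" "y \<in> {0..}"
  have shrink: "(s * z) powr p \<le> s * z powr p" if "0 \<le> s" "s \<le> 1" "0 \<le> z" for s z :: real
  proof -
    have "s powr p \<le> s powr 1"
      using that assms by (intro powr_mono') auto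
    then show ?thesis
      using that by (simp add: powr_mult mult_right_mono)
  qed
  consider "x = 0" | "y = 0" | "0 < x" "0 < y" using xy by fastforce
  then show "((1 - t) *\<^sub>R x + t *\<^sub>R y) powr p \<le> (1 - t) * x powr p + t * y powr p"
  proof cases
    case 1
    then show ?thesis using t xy assms shrink[of t y] by simp
  next
    case 2
    then show ?thesis using t xy assms shrink[of "1 - t" x] by simp
  next
    case 3
    then show ?thesis using t by (intro convex_onD[OF powr_convex[OF assms]]) auto
  qed
qed simp

text \<open>Where v = 0 the factor v kills the junk value of u / v, so the perspective is extended
  by 0 at the origin; the points (u, 0) with u > 0, where it would be infinite, are excluded.\<close>
lemma perspective_convex_le:
  fixes g :: "real \<Rightarrow> real"
  assumes g: "convex_on {0..} g"
    and uv: "0 \<le> u1" "0 \<le> u2" "0 \<le> v1" "0 \<le> v2" "v1 = 0 \<Longrightarrow> u1 = 0" "v2 = 0 \<Longrightarrow> u2 = 0"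
    and t: "0 \<le> t" "t \<le> 1"
  shows "(t * v1 + (1 - t) * v2) * g ((t * u1 + (1 - t) * u2) / (t * v1 + (1 - t) * v2))
     \<le> t * (v1 * g (u1 / v1)) + (1 - t) * (v2 * g (u2 / v2))"
proof -
  define v where "v = t * v1 + (1 - t) * v2"
  have parts: "0 \<le> t * v1" "0 \<le> (1 - t) * v2" using uv t by auto
  then consider "t * v1 = 0" "(1 - t) * v2 = 0" | "0 < v" unfolding v_def by fastforce
  then show ?thesis
  proof cases
    case 1
    then show ?thesis using uv by (auto simp: v_def)
  next
    case 2
    define l where "l = (1 - t) * v2 / v"
    have l: "0 \<le> l" "l \<le> 1" "1 - l = t * v1 / v"
      using 2 parts by (auto simp: l_def v_def field_simps)
    have "(1 - l) * (u1 / v1) = t * u1 / v"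
      using uv(5) unfolding l(3) by (cases "v1 = 0") auto
    moreover have "l * (u2 / v2) = (1 - t) * u2 / v"
      using uv(6) unfolding l_def by (cases "v2 = 0") auto
    ultimately have "(t * u1 + (1 - t) * u2) / v = (1 - l) *\<^sub>R (u1 / v1) + l *\<^sub>R (u2 / v2)"
      by (simp add: add_divide_distrib)
    moreover have "g ((1 - l) *\<^sub>R (u1 / v1) + l *\<^sub>R (u2 / v2)) \<le> (1 - l) * g (u1 / v1) + l * g (u2 / v2)"
      using uv l by (intro convex_onD[OF g]) auto
    ultimately have "v * g ((t * u1 + (1 - t) * u2) / v) \<le> v * ((1 - l) * g (u1 / v1) + l * g (u2 / v2))"
      using 2 by simp
    also have "\<dots> = (v * (1 - l)) * g (u1 / v1) + (v * l) * g (u2 / v2)"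
      by (simp add: algebra_simps)
    also have "\<dots> = t * (v1 * g (u1 / v1)) + (1 - t) * (v2 * g (u2 / v2))"
      using 2 l(3) by (simp add: l_def)
    finally show ?thesis unfolding v_def .
  qed
qed

lemma ereal_mult_INF:
  fixes f :: "'a \<Rightarrow> ereal"
  assumes "0 \<le> c" "A \<noteq> {}"
  shows "ereal c * (INF a\<in>A. f a) = (INF a\<in>A. ereal c * f a)"
proof (cases "c = 0")
  case True
  then show ?thesis using assms(2) by (simp add: zero_ereal_def[symmetric])
next
  case False
  then show ?thesis
    using ereal_Inf_cmult[of c "\<lambda>x. x \<in> f ` A"] assms(1)
    by (simp add: setcompr_eq_image image_image)
qed

lemma le_convex_combination_INF:
  fixes f g :: "'a \<Rightarrow> ereal"
  assumes "0 \<le> s" "0 \<le> t" "A \<noteq> {}" "B \<noteq> {}"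
    and "\<And>a. a \<in> A \<Longrightarrow> 0 \<le> f a" "\<And>b. b \<in> B \<Longrightarrow> 0 \<le> g b"
    and le: "\<And>a b. a \<in> A \<Longrightarrow> b \<in> B \<Longrightarrow> L \<le> ereal s * f a + ereal t * g b"
  shows "L \<le> ereal s * (INF a\<in>A. f a) + ereal t * (INF b\<in>B. g b)"
proof -
  have "L \<le> (INF a\<in>A. INF b\<in>B. ereal s * f a + ereal t * g b)"
    using le by (intro INF_greatest) auto
  also have "\<dots> = (INF a\<in>A. ereal s * f a + (INF b\<in>B. ereal t * g b))"
  proof (rule INF_cong[OF refl])
    fix a assume "a \<in> A"
    then show "(INF b\<in>B. ereal s * f a + ereal t * g b) = ereal s * f a + (INF b\<in>B. ereal t * g b)"
      using assms by (intro INF_ereal_add_right) auto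
  qed
  also have "\<dots> = (INF a\<in>A. ereal s * f a) + (INF b\<in>B. ereal t * g b)"
    using assms by (intro INF_ereal_add_left) (auto simp: INF_eq_minf intro!: exI[of _ 0])
  also have "\<dots> = ereal s * (INF a\<in>A. f a) + ereal t * (INF b\<in>B. g b)"
    using assms by (simp add: ereal_mult_INF)
  finally show ?thesis .
qed

lemma order_embedding_Inf:
  fixes g :: "'a::complete_linorder \<Rightarrow> 'b::{complete_linorder, dense_linorder}"
  assumes embedding: "\<And>x y. g x \<le> g y \<longleftrightarrow> x \<le> y"
    and onto: "\<And>y. g bot < y \<Longrightarrow> y \<in> range g"
  shows "g (Inf S) = (INF s\<in>S. g s)"
proof (rule antisym)
  show "g (Inf S) \<le> (INF s\<in>S. g s)"
    by (rule INF_greatest) (simp add: embedding Inf_lower)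
  show "(INF s\<in>S. g s) \<le> g (Inf S)"
  proof (rule ccontr)
    assume "\<not> (INF s\<in>S. g s) \<le> g (Inf S)"
    then have "g (Inf S) < (INF s\<in>S. g s)" by simp
    then obtain y where y: "g (Inf S) < y" "y < (INF s\<in>S. g s)"
      using dense by blast
    have "g bot \<le> g (Inf S)" using embedding by simp
    then have "y \<in> range g" using onto y(1) by simp
    then obtain z where z: "y = g z" by blast
    have "z \<le> Inf S"
    proof (rule Inf_greatest)
      fix s assume "s \<in> S"
      then have "g z \<le> g s" using y(2) z by (metis INF_lower less_imp_le order_trans)
      then show "z \<le> s" using embedding by simp
    qed
    then have "g z \<le> g (Inf S)" using embedding by simp
    with y z show False by simp
  qed
qed

lemma exp_ereal_PInf [simp]: "exp_ereal \<infinity> = \<infinity>"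
  by (metis exp_ereal.simps(2) infinity_ereal_def)

lemma exp_ereal_MInf [simp]: "exp_ereal (-\<infinity>) = 0"
  by (metis exp_ereal.simps(3) uminus_ereal.simps(2) infinity_ereal_def)

lemma exp_ereal_Inf: "exp_ereal (Inf S) = (INF s\<in>S. exp_ereal s)"
proof (rule order_embedding_Inf)
  fix x y :: ereal
  show "exp_ereal x \<le> exp_ereal y \<longleftrightarrow> x \<le> y"
    by (cases x; cases y) auto
next
  fix y :: ereal
  assume "exp_ereal bot < y"
  then show "y \<in> range exp_ereal"
  proof (cases y)
    case (real r)
    then have "y = exp_ereal (ereal (ln r))"
      using \<open>exp_ereal bot < y\<close> by (simp add: bot_ereal_def)
    then show ?thesis by blast
  next
    case PInf
    then have "y = exp_ereal \<infinity>" by simp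
    then show ?thesis by blast
  qed (use \<open>exp_ereal bot < y\<close> in \<open>simp add: bot_ereal_def\<close>)
qed

lemma exp_ereal_mult_Inf:
  assumes "0 < a"
  shows "exp_ereal (ereal a * Inf S) = (INF s\<in>S. exp_ereal (ereal a * s))"
proof -
  have "ereal a * Inf S = Inf ((*) (ereal a) ` S)"
    using ereal_Inf_cmult[of a "\<lambda>x. x \<in> S"] assms by (simp add: setcompr_eq_image)
  then show ?thesis by (simp add: exp_ereal_Inf image_image)
qed

lemma renyi_term_nonneg: "0 \<le> renyi_term \<alpha> u v"
  unfolding renyi_term_def by auto

lemma renyi_sum_nonneg: "0 \<le> renyi_sum \<alpha> P Q"
  unfolding renyi_sum_def by (rule sum_nonneg) (simp add: renyi_term_nonneg)

lemma renyi_term_eq_perspective: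
  fixes u v :: real
  assumes "0 \<le> u" "0 \<le> v" "v = 0 \<Longrightarrow> u = 0"
  shows "renyi_term \<alpha> u v = ereal (v * (u / v) powr \<alpha>)"
  using assms by (auto simp: renyi_term_def powr_divide powr_diff field_simps)

lemma renyi_term_convex:
  fixes \<alpha> t u1 u2 v1 v2 :: real
  assumes "\<alpha> \<ge> 1" "0 \<le> u1" "0 \<le> u2" "0 \<le> v1" "0 \<le> v2" "0 \<le> t" "t \<le> 1"
  shows "renyi_term \<alpha> (t * u1 + (1 - t) * u2) (t * v1 + (1 - t) * v2)
     \<le> ereal t * renyi_term \<alpha> u1 v1 + ereal (1 - t) * renyi_term \<alpha> u2 v2"
proof -
  consider "t = 0 \<or> t = 1" | "0 < t" "t < 1" "(v1 = 0 \<and> u1 \<noteq> 0) \<or> (v2 = 0 \<and> u2 \<noteq> 0)"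
    | "v1 = 0 \<Longrightarrow> u1 = 0" "v2 = 0 \<Longrightarrow> u2 = 0"
    using assms by linarith
  then show ?thesis
  proof cases
    case 1
    then show ?thesis by (auto simp: zero_ereal_def[symmetric])
  next
    case 2
    then have "ereal t * renyi_term \<alpha> u1 v1 + ereal (1 - t) * renyi_term \<alpha> u2 v2 = \<infinity>"
      using renyi_term_nonneg[of \<alpha> u1 v1] renyi_term_nonneg[of \<alpha> u2 v2]
      by (auto simp: renyi_term_def)
    then show ?thesis by (simp only: ereal_less_eq(1))
  next
    case 3
    have "0 \<le> t * v1" "0 \<le> (1 - t) * v2" using assms by auto
    then have "t * v1 + (1 - t) * v2 = 0 \<Longrightarrow> t * u1 + (1 - t) * u2 = 0"
      using 3 assms by (auto simp: add_nonneg_eq_0_iff)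
    then have "renyi_term \<alpha> (t * u1 + (1 - t) * u2) (t * v1 + (1 - t) * v2)
        = ereal ((t * v1 + (1 - t) * v2) * ((t * u1 + (1 - t) * u2) / (t * v1 + (1 - t) * v2)) powr \<alpha>)"
      using assms by (intro renyi_term_eq_perspective) auto
    also have "\<dots> \<le> ereal (t * (v1 * (u1 / v1) powr \<alpha>) + (1 - t) * (v2 * (u2 / v2) powr \<alpha>))"
      using 3 assms by (auto intro: perspective_convex_le convex_on_powr_nonneg)
    also have "\<dots> = ereal t * renyi_term \<alpha> u1 v1 + ereal (1 - t) * renyi_term \<alpha> u2 v2"
      using 3 assms by (simp add: renyi_term_eq_perspective)
    finally show ?thesis .
  qed
qed

lemma renyi_sum_convex:
  fixes P1 P2 Q1 Q2 :: "'a::finite \<Rightarrow> real"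
  assumes "\<alpha> \<ge> 1" "\<And>x. 0 \<le> P1 x" "\<And>x. 0 \<le> P2 x" "\<And>x. 0 \<le> Q1 x" "\<And>x. 0 \<le> Q2 x"
    "0 \<le> t" "t \<le> 1"
  shows "renyi_sum \<alpha> (cmix t P1 P2) (cmix t Q1 Q2)
     \<le> ereal t * renyi_sum \<alpha> P1 Q1 + ereal (1 - t) * renyi_sum \<alpha> P2 Q2"
proof -
  have "renyi_sum \<alpha> (cmix t P1 P2) (cmix t Q1 Q2)
     \<le> (\<Sum>x\<in>UNIV. ereal t * renyi_term \<alpha> (P1 x) (Q1 x) + ereal (1 - t) * renyi_term \<alpha> (P2 x) (Q2 x))"
    unfolding renyi_sum_def cmix_def by (rule sum_mono) (intro renyi_term_convex assms)
  also have "\<dots> = ereal t * renyi_sum \<alpha> P1 Q1 + ereal (1 - t) * renyi_sum \<alpha> P2 Q2"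
    unfolding renyi_sum_def sum.distrib by (simp add: sum_ereal_right_distrib renyi_term_nonneg)
  finally show ?thesis .
qed

lemma renyi_sum_pos:
  fixes P Q :: "'a::finite \<Rightarrow> real"
  assumes "is_dist P" "\<And>x. 0 \<le> Q x"
  shows "0 < renyi_sum \<alpha> P Q"
proof -
  have "\<not> (\<forall>x. P x \<le> 0)"
    using assms(1) sum_nonpos[of UNIV P] unfolding is_dist_def by auto
  then obtain x where x: "0 < P x" by (auto simp: not_le)
  then have "0 < renyi_term \<alpha> (P x) (Q x)"
    using assms(2)[of x] by (auto simp: renyi_term_def)
  also have "\<dots> = (\<Sum>y\<in>{x}. renyi_term \<alpha> (P y) (Q y))" by simp
  also have "\<dots> \<le> renyi_sum \<alpha> P Q"
    unfolding renyi_sum_def by (rule sum_mono2) (auto simp: renyi_term_nonneg)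
  finally show ?thesis .
qed

lemma exp_renyi_div:
  fixes P Q :: "'a::finite \<Rightarrow> real"
  assumes "\<alpha> > 1" "is_dist P" "\<And>x. 0 \<le> Q x"
  shows "exp_ereal (ereal (\<alpha> - 1) * renyi_div \<alpha> P Q) = renyi_sum \<alpha> P Q"
proof (cases "renyi_sum \<alpha> P Q")
  case (real r)
  moreover have "0 < r" using renyi_sum_pos[of P Q \<alpha>] assms(2,3) real by simp
  ultimately show ?thesis using assms(1) by (simp add: renyi_div_def)
next
  case PInf
  then show ?thesis using assms(1) by (simp add: renyi_div_def)
next
  case MInf
  then show ?thesis using renyi_sum_nonneg[of \<alpha> P Q] by simp
qed

lemma is_dist_cmix:
  assumes "is_dist P1" "is_dist P2" "0 \<le> t" "t \<le> 1"
  shows "is_dist (cmix t P1 P2)"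
  using assms unfolding is_dist_def cmix_def
  by (simp add: sum.distrib sum_distrib_left[symmetric])

lemma smooth_feasible_cmix:
  assumes "smooth_feasible \<delta> P1 Q1 P1' Q1'" "smooth_feasible \<delta> P2 Q2 P2' Q2'" "0 \<le> t" "t \<le> 1"
  shows "smooth_feasible \<delta> (cmix t P1 P2) (cmix t Q1 Q2) (cmix t P1' P2') (cmix t Q1' Q2')"
proof -
  have "t * a1 + (1 - t) * a2 \<le> (t * b1 + (1 - t) * b2) / (1 - \<delta>)"
    if "a1 \<le> b1 / (1 - \<delta>)" "a2 \<le> b2 / (1 - \<delta>)" for a1 a2 b1 b2 :: real
  proof -
    have "t * a1 + (1 - t) * a2 \<le> t * (b1 / (1 - \<delta>)) + (1 - t) * (b2 / (1 - \<delta>))"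
      using that assms by (intro add_mono mult_left_mono) auto
    then show ?thesis by (simp add: add_divide_distrib)
  qed
  then show ?thesis using assms unfolding smooth_feasible_def cmix_def
    by (auto simp: sum.distrib sum_distrib_left[symmetric])
qed

lemma joint_feasible_cmix:
  assumes "(P1, Q1, P1', Q1') \<in> joint_feasible \<delta>" "(P2, Q2, P2', Q2') \<in> joint_feasible \<delta>"
    "0 \<le> t" "t \<le> 1"
  shows "(cmix t P1 P2, cmix t Q1 Q2, cmix t P1' P2', cmix t Q1' Q2') \<in> joint_feasible \<delta>"
  using assms is_dist_cmix smooth_feasible_cmix unfolding joint_feasible_def by auto

lemma smooth_feasible_self:
  assumes "is_dist P" "is_dist Q" "0 \<le> \<delta>" "\<delta> < 1"
  shows "smooth_feasible \<delta> P Q P Q"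
proof -
  have "a \<le> a / (1 - \<delta>)" if "0 \<le> a" for a :: real
    using that assms(3,4) by (simp add: le_divide_eq mult_left_le)
  then show ?thesis using assms unfolding smooth_feasible_def is_dist_def by auto
qed

lemma dist_mixture_component_iff:
  fixes P P' :: "'a::finite \<Rightarrow> real"
  assumes "0 \<le> \<delta>" "\<delta> < 1" "is_dist P" "is_dist P'"
  shows "(\<exists>P''. is_dist P'' \<and> P = (\<lambda>x. (1 - \<delta>) * P' x + \<delta> * P'' x))
    \<longleftrightarrow> (\<forall>x. P' x \<le> P x / (1 - \<delta>))"
proof
  assume "\<exists>P''. is_dist P'' \<and> P = (\<lambda>x. (1 - \<delta>) * P' x + \<delta> * P'' x)"
  then obtain P'' where "is_dist P''" "P = (\<lambda>x. (1 - \<delta>) * P' x + \<delta> * P'' x)" by blast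
  then have "(1 - \<delta>) * P' x \<le> P x" for x
    using assms(1) unfolding is_dist_def by simp
  then show "\<forall>x. P' x \<le> P x / (1 - \<delta>)"
    using assms(2) by (simp add: le_divide_eq mult.commute)
next
  assume "\<forall>x. P' x \<le> P x / (1 - \<delta>)"
  then have below: "(1 - \<delta>) * P' x \<le> P x" for x
    using assms(2) by (simp add: le_divide_eq mult.commute)
  show "\<exists>P''. is_dist P'' \<and> P = (\<lambda>x. (1 - \<delta>) * P' x + \<delta> * P'' x)"
  proof (cases "\<delta> = 0")
    case True
    have "(\<Sum>x\<in>UNIV. P x - P' x) = 0"
      using assms(3,4) unfolding is_dist_def by (simp add: sum_subtractf)
    then have "P = P'"
      using below True by (subst (asm) sum_nonneg_eq_0_iff) auto
    then show ?thesis using True assms(3) by auto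
  next
    case False
    define P'' where "P'' = (\<lambda>x. (P x - (1 - \<delta>) * P' x) / \<delta>)"
    have "(\<Sum>x\<in>UNIV. P'' x) = ((\<Sum>x\<in>UNIV. P x) - (1 - \<delta>) * (\<Sum>x\<in>UNIV. P' x)) / \<delta>"
      unfolding P''_def by (simp add: sum_divide_distrib[symmetric] sum_subtractf sum_distrib_left)
    then have "is_dist P''"
      using assms False below unfolding is_dist_def P''_def by simp
    moreover have "P = (\<lambda>x. (1 - \<delta>) * P' x + \<delta> * P'' x)"
      using False unfolding P''_def by auto
    ultimately show ?thesis by blast
  qed
qed

lemma smooth_feasible_iff_mixture:
  fixes P Q P' Q' :: "'a::finite \<Rightarrow> real"
  assumes "0 \<le> \<delta>" "\<delta> < 1" "is_dist P" "is_dist Q"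
  shows "smooth_feasible \<delta> P Q P' Q' \<longleftrightarrow>
    (\<exists>P'' Q''. is_dist P' \<and> is_dist P'' \<and> is_dist Q' \<and> is_dist Q'' \<and>
       P = (\<lambda>x. (1 - \<delta>) * P' x + \<delta> * P'' x) \<and> Q = (\<lambda>x. (1 - \<delta>) * Q' x + \<delta> * Q'' x))"
proof -
  have "smooth_feasible \<delta> P Q P' Q' \<longleftrightarrow>
      is_dist P' \<and> is_dist Q' \<and> (\<forall>x. P' x \<le> P x / (1 - \<delta>)) \<and> (\<forall>x. Q' x \<le> Q x / (1 - \<delta>))"
    unfolding smooth_feasible_def is_dist_def by auto
  then show ?thesis
    using dist_mixture_component_iff[OF assms(1-3), of P'] dist_mixture_component_iff[OF assms(1,2,4), of Q']
    by blast
qed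

definition smooth_program_value :: "real \<Rightarrow> real \<Rightarrow> ('a::finite \<Rightarrow> real) \<Rightarrow> ('a \<Rightarrow> real) \<Rightarrow> ereal" where
  "smooth_program_value \<alpha> \<delta> P Q =
     (INF (P', Q') \<in> {(P', Q'). smooth_feasible \<delta> P Q P' Q'}. renyi_sum \<alpha> P' Q')"

lemma exp_smooth_renyi_eq_program_value:
  fixes P Q :: "'a::finite \<Rightarrow> real"
  assumes "\<alpha> > 1" "0 \<le> \<delta>" "\<delta> < 1" "is_dist P" "is_dist Q"
  shows "exp_ereal (ereal (\<alpha> - 1) * smooth_renyi \<alpha> \<delta> P Q) = smooth_program_value \<alpha> \<delta> P Q"
proof -
  define S where "S = {(P', P'', Q', Q''). is_dist P' \<and> is_dist P'' \<and> is_dist Q' \<and> is_dist Q'' \<and>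
    P = (\<lambda>x. (1 - \<delta>) * P' x + \<delta> * P'' x) \<and> Q = (\<lambda>x. (1 - \<delta>) * Q' x + \<delta> * Q'' x)}"
  have feasible: "{(P', Q'). smooth_feasible \<delta> P Q P' Q'} = (\<lambda>(P', P'', Q', Q''). (P', Q')) ` S"
  proof (intro equalityI subsetI)
    fix z
    assume "z \<in> {(P', Q'). smooth_feasible \<delta> P Q P' Q'}"
    then obtain P' Q' where "z = (P', Q')" "smooth_feasible \<delta> P Q P' Q'" by blast
    moreover from this obtain P'' Q'' where "(P', P'', Q', Q'') \<in> S"
      using smooth_feasible_iff_mixture[OF assms(2-5)] unfolding S_def by blast
    ultimately show "z \<in> (\<lambda>(P', P'', Q', Q''). (P', Q')) ` S" by force
  next
    fix z
    assume "z \<in> (\<lambda>(P', P'', Q', Q''). (P', Q')) ` S"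
    then obtain P' P'' Q' Q'' where "z = (P', Q')" "(P', P'', Q', Q'') \<in> S" by auto
    then show "z \<in> {(P', Q'). smooth_feasible \<delta> P Q P' Q'}"
      using smooth_feasible_iff_mixture[OF assms(2-5)] unfolding S_def by blast
  qed
  have "exp_ereal (ereal (\<alpha> - 1) * smooth_renyi \<alpha> \<delta> P Q)
      = (INF (P', P'', Q', Q'') \<in> S. exp_ereal (ereal (\<alpha> - 1) * renyi_div \<alpha> P' Q'))"
    unfolding smooth_renyi_def S_def using assms(1)
    by (simp add: exp_ereal_mult_Inf image_image case_prod_unfold)
  also have "\<dots> = (INF (P', P'', Q', Q'') \<in> S. renyi_sum \<alpha> P' Q')"
    using assms(1) by (intro INF_cong) (auto simp: S_def exp_renyi_div is_dist_def)
  also have "\<dots> = smooth_program_value \<alpha> \<delta> P Q"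
    unfolding smooth_program_value_def feasible by (simp add: image_image case_prod_unfold)
  finally show ?thesis .
qed

lemma smooth_program_value_convex:
  fixes P1 Q1 P2 Q2 :: "'a::finite \<Rightarrow> real"
  assumes "\<alpha> \<ge> 1" "0 \<le> \<delta>" "\<delta> < 1" "is_dist P1" "is_dist Q1" "is_dist P2" "is_dist Q2"
    "0 \<le> t" "t \<le> 1"
  shows "smooth_program_value \<alpha> \<delta> (cmix t P1 P2) (cmix t Q1 Q2)
    \<le> ereal t * smooth_program_value \<alpha> \<delta> P1 Q1 + ereal (1 - t) * smooth_program_value \<alpha> \<delta> P2 Q2"
proof -
  let ?F = "\<lambda>P Q. {(P', Q'). smooth_feasible \<delta> P Q P' Q'}"
  let ?rs = "\<lambda>(P', Q'). renyi_sum \<alpha> P' Q'"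
  have "(INF a \<in> ?F (cmix t P1 P2) (cmix t Q1 Q2). ?rs a)
      \<le> ereal t * (INF a \<in> ?F P1 Q1. ?rs a) + ereal (1 - t) * (INF b \<in> ?F P2 Q2. ?rs b)"
  proof (rule le_convex_combination_INF)
    show "?F P1 Q1 \<noteq> {}" "?F P2 Q2 \<noteq> {}"
      using smooth_feasible_self assms by blast+
  next
    fix a b
    assume "a \<in> ?F P1 Q1" "b \<in> ?F P2 Q2"
    then obtain P1' Q1' P2' Q2' where ab: "a = (P1', Q1')" "b = (P2', Q2')"
      and feasible: "smooth_feasible \<delta> P1 Q1 P1' Q1'" "smooth_feasible \<delta> P2 Q2 P2' Q2'"
      by auto
    have "(cmix t P1' P2', cmix t Q1' Q2') \<in> ?F (cmix t P1 P2) (cmix t Q1 Q2)"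
      using smooth_feasible_cmix[OF feasible assms(8,9)] by simp
    then have "(INF a \<in> ?F (cmix t P1 P2) (cmix t Q1 Q2). ?rs a) \<le> ?rs (cmix t P1' P2', cmix t Q1' Q2')"
      by (rule INF_lower)
    also have "\<dots> \<le> ereal t * ?rs a + ereal (1 - t) * ?rs b"
      using feasible assms unfolding ab smooth_feasible_def by (auto intro: renyi_sum_convex)
    finally show "(INF a \<in> ?F (cmix t P1 P2) (cmix t Q1 Q2). ?rs a) \<le> ereal t * ?rs a + ereal (1 - t) * ?rs b" .
  qed (use assms in \<open>auto simp: renyi_sum_nonneg\<close>)
  then show ?thesis unfolding smooth_program_value_def .
qed

theorem mainTheorem8:
  fixes P Q :: "'a::finite \<Rightarrow> real" and \<alpha> \<delta> :: real
  assumes "\<alpha> > 1" and "0 \<le> \<delta>" and "\<delta> < 1"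
    and "is_dist P" and "is_dist Q"
  shows "exp_ereal (ereal (\<alpha> - 1) * smooth_renyi \<alpha> \<delta> P Q)
           = (INF (P', Q') \<in> {(P', Q'). smooth_feasible \<delta> P Q P' Q'}. renyi_sum \<alpha> P' Q')
    \<and> (\<forall>P1 Q1 P1' Q1' P2 Q2 P2' Q2' :: 'a \<Rightarrow> real. \<forall>t.
          (P1, Q1, P1', Q1') \<in> joint_feasible \<delta> \<longrightarrow>
          (P2, Q2, P2', Q2') \<in> joint_feasible \<delta> \<longrightarrow> 0 \<le> t \<longrightarrow> t \<le> 1 \<longrightarrow>
          (cmix t P1 P2, cmix t Q1 Q2, cmix t P1' P2', cmix t Q1' Q2') \<in> joint_feasible \<delta> \<and>
          renyi_sum \<alpha> (cmix t P1' P2') (cmix t Q1' Q2')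
            \<le> ereal t * renyi_sum \<alpha> P1' Q1' + ereal (1 - t) * renyi_sum \<alpha> P2' Q2')
    \<and> (\<forall>P1 Q1 P2 Q2 :: 'a \<Rightarrow> real. \<forall>t.
          is_dist P1 \<longrightarrow> is_dist Q1 \<longrightarrow> is_dist P2 \<longrightarrow> is_dist Q2 \<longrightarrow> 0 \<le> t \<longrightarrow> t \<le> 1 \<longrightarrow>
          exp_ereal (ereal (\<alpha> - 1) * smooth_renyi \<alpha> \<delta> (cmix t P1 P2) (cmix t Q1 Q2))
            \<le> ereal t * exp_ereal (ereal (\<alpha> - 1) * smooth_renyi \<alpha> \<delta> P1 Q1)
              + ereal (1 - t) * exp_ereal (ereal (\<alpha> - 1) * smooth_renyi \<alpha> \<delta> P2 Q2))"
proof -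
  note program_value = exp_smooth_renyi_eq_program_value[OF assms(1-3)]
  show ?thesis
    apply (intro conjI allI impI)
    subgoal
      using program_value[OF assms(4,5)] by (simp only: smooth_program_value_def)
    subgoal
      using joint_feasible_cmix by blast
    subgoal
      using assms(1) unfolding joint_feasible_def smooth_feasible_def
      by (auto intro!: renyi_sum_convex)
    subgoal for P1 Q1 P2 Q2 t
      using smooth_program_value_convex[of \<alpha> \<delta> P1 Q1 P2 Q2 t] assms(1-3)
      by (simp add: program_value is_dist_cmix)
    done
qed

end
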